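(* Let $S_{n-1}$ denote the star graph with $n$ nodes (one center joined to $n-1$ leaves). For every fixed $\epsilon\in(0,1)$, $t_{\epsilon,1}(S_{n-1})=\Theta_\epsilon(n\log n)$; that is, there are constants $0<c_\epsilon\le C_\epsilon$ depending only on $\epsilon$ with $c_\epsilon n\log n\le t_{\epsilon,1}(S_{n-1})\le C_\epsilon n\log n$ for all $n\ge 3$.
   Context: For a finite, undirected, connected graph $G=(V,E)$ with $V=\{1,\dots,n\}$, the averaging process on $G$: the state vector $v(t)\in\mathbb R^n$, $t=0,1,2,\dots$, starts from a given $v(0)$; at each step $t\ge 1$ an edge $\{i,j\}\in E$ is chosen uniformly at random (independently of all previous choices) and both $v_i$ and $v_j$ are replaced by $(v_i+v_j)/2$, all other coordinates unchanged. Let $\bar v=(a,\dots,a)^T$ with $a=\frac1n\sum_i v_i(0)$. $t_{\epsilon,1}(G)$ is the least $t\in\mathbb N$ such that for every $v(0)$ with $\|v(0)\|_1=1$ one has $\mathbb E\|v(t)-\bar v\|_1\le\epsilon$. *)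

theory Defs
  imports Complex_Main
begin

text \<open>A graph on vertex set {1..n} is given by its edge set E, a set of
  2-element subsets of {1..n}. State vectors are functions nat => real,
  of which only the coordinates 1..n matter.\<close>

definition avg_step :: "nat set \<Rightarrow> (nat \<Rightarrow> real) \<Rightarrow> (nat \<Rightarrow> real)" where
  "avg_step e v = (\<lambda>k. if k \<in> e then (\<Sum>l\<in>e. v l) / 2 else v k)"

definition avg_run :: "nat set list \<Rightarrow> (nat \<Rightarrow> real) \<Rightarrow> (nat \<Rightarrow> real)" where
  "avg_run es v0 = foldl (\<lambda>v e. avg_step e v) v0 es"

definition l1_dev :: "nat \<Rightarrow> (nat \<Rightarrow> real) \<Rightarrow> (nat \<Rightarrow> real) \<Rightarrow> real" where
  "l1_dev n v0 v = (\<Sum>i\<in>{1..n}. \<bar>v i - (\<Sum>j\<in>{1..n}. v0 j) / real n\<bar>)"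

text \<open>Expectation of the L1 deviation after t steps, each step an
  independent uniformly random edge: average over all |E|^t edge sequences.\<close>
definition exp_l1_dev :: "nat \<Rightarrow> nat set set \<Rightarrow> nat \<Rightarrow> (nat \<Rightarrow> real) \<Rightarrow> real" where
  "exp_l1_dev n E t v0 =
     (\<Sum>es\<in>{es. set es \<subseteq> E \<and> length es = t}. l1_dev n v0 (avg_run es v0))
       / real (card E) ^ t"

definition t_eps1 :: "nat \<Rightarrow> nat set set \<Rightarrow> real \<Rightarrow> nat" where
  "t_eps1 n E \<epsilon> = (LEAST t. \<forall>v0. (\<Sum>i\<in>{1..n}. \<bar>v0 i\<bar>) = 1 \<longrightarrow> exp_l1_dev n E t v0 \<le> \<epsilon>)"

definition star_edges :: "nat \<Rightarrow> nat set set" where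
  "star_edges n = {{1, k} | k. k \<in> {2..n}}"

end

theory Submission
  imports Defs
begin

text \<open>Upper bound: the squared deviation from the average loses, in expectation,
  at least a fraction 1/(2n) per step, because the drop (v 1 - v k)^2/2 caused by the
  edge {1,k}, summed over the leaves k, dominates the squared deviation. After
  2 n ln(n/\<epsilon>^2) steps it is at most \<epsilon>^2/n, and the pointwise bound
  |x| \<le> n/(2\<epsilon>) x^2 + \<epsilon>/(2n) turns this into L1 deviation \<epsilon>.

  Lower bound: start with unit mass on a leaf. The potential
  \<Phi>(v) = \<Sum>i. -v i ln(v i) + 2 v 1 grows by at most 2/(n-1) per step in expectation,
  since averaging two masses raises their entropy by at most their total mass.
  Conversely, for a probability vector v and K > 1 the L1 deviation from the uniform
  vector is at least (1 - 1/K) times the mass on coordinates \<ge> K/n, and the mass on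
  the other coordinates is at most the entropy divided by ln(n/K). With K = 2/(1-\<epsilon>),
  deviation \<epsilon> therefore needs entropy of order (1-\<epsilon>) ln n, hence of order
  (1-\<epsilon>) n ln n steps.\<close>

section \<open>Expectations along the averaging process\<close>

definition mean_step :: "nat set set \<Rightarrow> ((nat \<Rightarrow> real) \<Rightarrow> real) \<Rightarrow> (nat \<Rightarrow> real) \<Rightarrow> real" where
  "mean_step E F v = (\<Sum>e\<in>E. F (avg_step e v)) / real (card E)"

definition mean_after :: "nat set set \<Rightarrow> nat \<Rightarrow> ((nat \<Rightarrow> real) \<Rightarrow> real) \<Rightarrow> (nat \<Rightarrow> real) \<Rightarrow> real" where
  "mean_after E t F = (mean_step E ^^ t) F"

definition avg_invariant :: "nat set set \<Rightarrow> (nat \<Rightarrow> real) set \<Rightarrow> bool" where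
  "avg_invariant E I \<longleftrightarrow> (\<forall>v\<in>I. \<forall>e\<in>E. avg_step e v \<in> I)"

lemma mean_after_0 [simp]: "mean_after E 0 F = F"
  by (simp add: mean_after_def)

lemma mean_after_Suc: "mean_after E (Suc t) F = mean_step E (mean_after E t F)"
  by (simp add: mean_after_def)

lemma mean_after_Suc_right: "mean_after E (Suc t) F = mean_after E t (mean_step E F)"
  by (simp add: mean_after_def funpow_Suc_right del: funpow.simps)

lemma avg_run_Cons: "avg_run (e # es) v = avg_run es (avg_step e v)"
  by (simp add: avg_run_def)

lemma sum_avg_run_eq_mean_after:
  shows "(\<Sum>es\<in>{es. set es \<subseteq> E \<and> length es = t}. F (avg_run es v)) / real (card E) ^ t
           = mean_after E t F v"
proof (induction t arbitrary: v)
  case 0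
  have "{es. set es \<subseteq> E \<and> length es = 0} = {[]}" by auto
  then show ?case by (simp add: avg_run_def)
next
  case (Suc t)
  let ?runs = "{es. set es \<subseteq> E \<and> length es = t}"
  have inj: "inj_on (\<lambda>(es, e). e # es) (?runs \<times> E)" by (auto simp: inj_on_def)
  have "(\<Sum>es\<in>{es. set es \<subseteq> E \<and> length es = Suc t}. F (avg_run es v))
      = (\<Sum>(es, e)\<in>?runs \<times> E. F (avg_run (e # es) v))"
    unfolding lists_length_Suc_eq by (subst sum.reindex[OF inj]) (simp add: split_def)
  also have "\<dots> = (\<Sum>e\<in>E. \<Sum>es\<in>?runs. F (avg_run es (avg_step e v)))"
    by (simp add: sum.cartesian_product[symmetric] avg_run_Cons sum.swap[of _ ?runs])
  finally have "(\<Sum>es\<in>{es. set es \<subseteq> E \<and> length es = Suc t}. F (avg_run es v)) / real (card E) ^ Suc t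
      = (\<Sum>e\<in>E. (\<Sum>es\<in>?runs. F (avg_run es (avg_step e v))) / real (card E) ^ t) / real (card E)"
    by (simp add: sum_divide_distrib field_simps)
  then show ?case using Suc by (simp add: mean_after_Suc mean_step_def)
qed

lemma exp_l1_dev_eq_mean_after:
  "exp_l1_dev n E t v0 = mean_after E t (l1_dev n v0) v0"
  unfolding exp_l1_dev_def by (rule sum_avg_run_eq_mean_after)

lemma mean_after_mono:
  assumes "avg_invariant E I" "\<And>v. v \<in> I \<Longrightarrow> F v \<le> G v" "v \<in> I"
  shows "mean_after E t F v \<le> mean_after E t G v"
  using \<open>v \<in> I\<close>
proof (induction t arbitrary: v)
  case (Suc t)
  have "(\<Sum>e\<in>E. mean_after E t F (avg_step e v)) \<le> (\<Sum>e\<in>E. mean_after E t G (avg_step e v))"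
    using Suc assms(1) by (intro sum_mono) (auto simp: avg_invariant_def)
  then show ?case by (simp add: mean_after_Suc mean_step_def divide_right_mono)
qed (use assms(2) in simp)

lemma mean_after_affine:
  assumes "finite E" "E \<noteq> {}"
  shows "mean_after E t (\<lambda>v. a * F v + b) v = a * mean_after E t F v + b"
proof (induction t arbitrary: v)
  case (Suc t)
  have "card E > 0" using assms by (simp add: card_gt_0_iff)
  with Suc show ?case
    by (simp add: mean_after_Suc mean_step_def sum.distrib sum_distrib_left[symmetric]
        add_divide_distrib)
qed simp

lemma mean_after_geometric_decay:
  assumes "finite E" "E \<noteq> {}" "avg_invariant E I"
    and "\<And>v. v \<in> I \<Longrightarrow> mean_step E F v \<le> r * F v" "0 \<le> r" "v \<in> I"
  shows "mean_after E t F v \<le> r ^ t * F v"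
  using \<open>v \<in> I\<close>
proof (induction t arbitrary: v)
  case (Suc t)
  have "mean_after E (Suc t) F v \<le> mean_after E t (\<lambda>v. r * F v + 0) v"
    unfolding mean_after_Suc_right by (rule mean_after_mono[OF assms(3)]) (use assms(4) Suc in auto)
  also have "\<dots> = r * mean_after E t F v" using mean_after_affine[OF assms(1,2), of t r F 0] by simp
  also have "\<dots> \<le> r * (r ^ t * F v)" using Suc \<open>0 \<le> r\<close> by (simp add: mult_left_mono)
  finally show ?case by simp
qed simp

lemma mean_after_linear_growth:
  assumes "finite E" "E \<noteq> {}" "avg_invariant E I"
    and "\<And>v. v \<in> I \<Longrightarrow> mean_step E F v \<le> F v + b" "v \<in> I"
  shows "mean_after E t F v \<le> F v + real t * b"
  using \<open>v \<in> I\<close>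
proof (induction t arbitrary: v)
  case (Suc t)
  have "mean_after E (Suc t) F v \<le> mean_after E t (\<lambda>v. 1 * F v + b) v"
    unfolding mean_after_Suc_right by (rule mean_after_mono[OF assms(3)]) (use assms(4) Suc in auto)
  also have "\<dots> = mean_after E t F v + b" using mean_after_affine[OF assms(1,2), of t 1 F b] by simp
  also have "\<dots> \<le> F v + real (Suc t) * b" using Suc by (simp add: algebra_simps)
  finally show ?case .
qed simp

definition l1_mixed :: "nat \<Rightarrow> nat set set \<Rightarrow> real \<Rightarrow> nat \<Rightarrow> bool" where
  "l1_mixed n E \<epsilon> t \<longleftrightarrow>
     (\<forall>v0. (\<Sum>i\<in>{1..n}. \<bar>v0 i\<bar>) = 1 \<longrightarrow> exp_l1_dev n E t v0 \<le> \<epsilon>)"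

lemma t_eps1_le: "l1_mixed n E \<epsilon> T \<Longrightarrow> t_eps1 n E \<epsilon> \<le> T"
  unfolding t_eps1_def l1_mixed_def by (rule Least_le)

lemma l1_mixed_t_eps1: "l1_mixed n E \<epsilon> T \<Longrightarrow> l1_mixed n E \<epsilon> (t_eps1 n E \<epsilon>)"
  unfolding t_eps1_def l1_mixed_def by (rule LeastI)

section \<open>The star graph\<close>

lemma star_edges_eq_image: "star_edges n = (\<lambda>k. {1, k}) ` {2..n}"
  by (auto simp: star_edges_def)

lemma inj_on_star_edge: "inj_on (\<lambda>k. {1::nat, k}) {2..n}"
  by (auto simp: inj_on_def doubleton_eq_iff)

lemma finite_star_edges: "finite (star_edges n)"
  by (simp add: star_edges_eq_image)

lemma card_star_edges: "card (star_edges n) = n - 1"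
  unfolding star_edges_eq_image card_image[OF inj_on_star_edge] by simp

lemma star_edges_nonempty: "2 \<le> n \<Longrightarrow> star_edges n \<noteq> {}"
  by (auto simp: star_edges_eq_image)

lemma sum_star_edges: "(\<Sum>e\<in>star_edges n. g e) = (\<Sum>k\<in>{2..n}. g {1, k})"
  unfolding star_edges_eq_image sum.reindex[OF inj_on_star_edge] by simp

lemma sum_split_center_leaf:
  fixes f :: "nat \<Rightarrow> real"
  assumes "k \<in> {2..n}"
  shows "(\<Sum>i\<in>{1..n}. f i) = f 1 + f k + (\<Sum>i\<in>{1..n} - {1, k}. f i)"
proof -
  have "1 \<in> {1..n}" "k \<in> {1..n} - {1}" using assms by auto
  then have "(\<Sum>i\<in>{1..n}. f i) = f 1 + (\<Sum>i\<in>{1..n} - {1}. f i)"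
     "(\<Sum>i\<in>{1..n} - {1}. f i) = f k + (\<Sum>i\<in>{1..n} - {1} - {k}. f i)"
    by (auto intro: sum.remove)
  moreover have "{1..n} - {1} - {k} = {1..n} - {1, k}" by auto
  ultimately show ?thesis by (simp add: add.assoc)
qed

lemma sum_avg_step_star:
  fixes \<phi> :: "real \<Rightarrow> real"
  assumes "k \<in> {2..n}"
  shows "(\<Sum>i\<in>{1..n}. \<phi> (avg_step {1, k} v i))
           = (\<Sum>i\<in>{1..n}. \<phi> (v i)) - \<phi> (v 1) - \<phi> (v k) + 2 * \<phi> ((v 1 + v k) / 2)"
proof -
  have k1: "k \<noteq> 1" using assms by auto
  have "(\<Sum>i\<in>{1..n} - {1, k}. \<phi> (avg_step {1, k} v i)) = (\<Sum>i\<in>{1..n} - {1, k}. \<phi> (v i))"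
    by (rule sum.cong) (auto simp: avg_step_def)
  then show ?thesis
    using sum_split_center_leaf[OF assms, of "\<lambda>i. \<phi> (avg_step {1, k} v i)"]
      sum_split_center_leaf[OF assms, of "\<lambda>i. \<phi> (v i)"] k1
    by (simp add: avg_step_def)
qed

lemma sum_avg_step_star_eq: "k \<in> {2..n} \<Longrightarrow> (\<Sum>i\<in>{1..n}. avg_step {1, k} v i) = (\<Sum>i\<in>{1..n}. v i)"
  using sum_avg_step_star[of k n "\<lambda>x. x" v] by (simp add: field_simps)

section \<open>Upper bound\<close>

definition sq_dev :: "nat \<Rightarrow> real \<Rightarrow> (nat \<Rightarrow> real) \<Rightarrow> real" where
  "sq_dev n a v = (\<Sum>i\<in>{1..n}. (v i - a)^2)"

lemma sq_dev_avg_step_star: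
  "k \<in> {2..n} \<Longrightarrow> sq_dev n a (avg_step {1, k} v) = sq_dev n a v - (v 1 - v k)^2 / 2"
  using sum_avg_step_star[of k n "\<lambda>x. (x - a)^2" v] unfolding sq_dev_def
  by (simp add: power2_eq_square field_simps)

lemma sq_dev_le_sum_star_gaps:
  assumes "2 \<le> n" "(\<Sum>i\<in>{1..n}. v i) = real n * a"
  shows "sq_dev n a v \<le> (\<Sum>k\<in>{2..n}. (v 1 - v k)^2)"
proof -
  define x where "x i = v i - a" for i
  have split: "{1..n} = insert 1 {2..n}" using assms(1) by auto
  have "(\<Sum>i\<in>{1..n}. x i) = 0"
    using assms(2) by (simp add: x_def sum_subtractf)
  then have sum_leaves: "(\<Sum>k\<in>{2..n}. x k) = - x 1" unfolding split by simp
  have "(\<Sum>k\<in>{2..n}. (v 1 - v k)^2) = (\<Sum>k\<in>{2..n}. x 1 ^ 2 - 2 * x 1 * x k + (x k)^2)"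
    by (rule sum.cong) (auto simp: x_def power2_eq_square algebra_simps)
  also have "\<dots> = real (n - 1) * x 1 ^ 2 + 2 * x 1 ^ 2 + (\<Sum>k\<in>{2..n}. (x k)^2)"
    by (simp add: sum.distrib sum_subtractf sum_distrib_left[symmetric] sum_leaves power2_eq_square)
  finally show ?thesis unfolding sq_dev_def split by (simp add: x_def)
qed

lemma mean_step_sq_dev_star:
  assumes "2 \<le> n" "(\<Sum>i\<in>{1..n}. v i) = real n * a"
  shows "mean_step (star_edges n) (sq_dev n a) v \<le> (1 - 1 / (2 * real n)) * sq_dev n a v"
proof -
  define D where "D = (\<Sum>k\<in>{2..n}. (v 1 - v k)^2)"
  have "(\<Sum>k\<in>{2..n}. sq_dev n a (avg_step {1, k} v)) = (\<Sum>k\<in>{2..n}. sq_dev n a v - (v 1 - v k)^2 / 2)"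
    by (intro sum.cong refl sq_dev_avg_step_star)
  then have "mean_step (star_edges n) (sq_dev n a) v
      = (\<Sum>k\<in>{2..n}. sq_dev n a v - (v 1 - v k)^2 / 2) / real (n - 1)"
    unfolding mean_step_def sum_star_edges card_star_edges by simp
  also have "\<dots> = sq_dev n a v - D / (2 * real (n - 1))"
    using assms(1) by (simp add: sum_subtractf D_def sum_divide_distrib[symmetric] field_simps)
  also have "\<dots> \<le> sq_dev n a v - sq_dev n a v / (2 * real n)"
  proof -
    have "0 \<le> sq_dev n a v" unfolding sq_dev_def by (simp add: sum_nonneg)
    then have "sq_dev n a v / (2 * real n) \<le> sq_dev n a v / (2 * real (n - 1))"
      using assms(1) by (intro divide_left_mono) auto
    also have "\<dots> \<le> D / (2 * real (n - 1))"
      using sq_dev_le_sum_star_gaps[OF assms] assms(1) by (intro divide_right_mono) (auto simp: D_def)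
    finally show ?thesis by simp
  qed
  finally show ?thesis by (simp add: algebra_simps)
qed

lemma l1_dev_le_sq_dev:
  assumes "0 < \<epsilon>" "1 \<le> n"
  shows "l1_dev n v0 v \<le> real n / (2 * \<epsilon>) * sq_dev n ((\<Sum>j\<in>{1..n}. v0 j) / real n) v + \<epsilon> / 2"
proof -
  let ?a = "(\<Sum>j\<in>{1..n}. v0 j) / real n"
  have "\<bar>x\<bar> \<le> real n / (2 * \<epsilon>) * x^2 + \<epsilon> / (2 * real n)" for x :: real
  proof -
    have "0 \<le> real n / (2 * \<epsilon>) * (\<bar>x\<bar> - \<epsilon> / real n)^2" using assms by simp
    also have "\<dots> = real n / (2 * \<epsilon>) * x^2 + \<epsilon> / (2 * real n) - \<bar>x\<bar>"
      using assms by (simp add: power2_eq_square field_simps)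
    finally show ?thesis by simp
  qed
  then have "l1_dev n v0 v \<le> (\<Sum>i\<in>{1..n}. real n / (2 * \<epsilon>) * (v i - ?a)^2 + \<epsilon> / (2 * real n))"
    unfolding l1_dev_def by (intro sum_mono)
  also have "\<dots> = real n / (2 * \<epsilon>) * sq_dev n ?a v + \<epsilon> / 2"
    using assms by (simp add: sum.distrib sum_distrib_left sq_dev_def)
  finally show ?thesis .
qed

lemma sq_dev_mean_le_l1_norm:
  assumes "(\<Sum>i\<in>{1..n}. \<bar>v i\<bar>) = 1" "1 \<le> n"
  shows "sq_dev n ((\<Sum>j\<in>{1..n}. v j) / real n) v \<le> 1"
proof -
  define s where "s = (\<Sum>j\<in>{1..n}. v j)"
  define a where "a = s / real n"
  have "sq_dev n a v = (\<Sum>i\<in>{1..n}. (v i)^2) - 2 * a * s + real n * a^2"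
    unfolding sq_dev_def s_def
    by (simp add: power2_eq_square algebra_simps sum.distrib sum_subtractf sum_distrib_left)
  also have "\<dots> = (\<Sum>i\<in>{1..n}. (v i)^2) - real n * a^2"
    using assms(2) by (simp add: a_def power2_eq_square field_simps)
  also have "\<dots> \<le> (\<Sum>i\<in>{1..n}. \<bar>v i\<bar>)"
  proof -
    have "(v i)^2 \<le> \<bar>v i\<bar>" if "i \<in> {1..n}" for i
    proof -
      have "\<bar>v i\<bar> \<le> 1" using member_le_sum[OF that, of "\<lambda>i. \<bar>v i\<bar>"] assms(1) by simp
      then have "\<bar>v i\<bar> * \<bar>v i\<bar> \<le> \<bar>v i\<bar>" by (rule mult_left_le) simp
      then show ?thesis by (simp add: power2_eq_square)
    qed
    then have "(\<Sum>i\<in>{1..n}. (v i)^2) \<le> (\<Sum>i\<in>{1..n}. \<bar>v i\<bar>)" by (rule sum_mono)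
    moreover have "0 \<le> real n * a^2" by simp
    ultimately show ?thesis by linarith
  qed
  finally show ?thesis using assms(1) by (simp add: a_def s_def)
qed

lemma mean_after_sq_dev_star:
  assumes "2 \<le> n" "(\<Sum>i\<in>{1..n}. v i) = real n * a"
  shows "mean_after (star_edges n) t (sq_dev n a) v \<le> (1 - 1 / (2 * real n)) ^ t * sq_dev n a v"
proof (rule mean_after_geometric_decay[where I = "{v. (\<Sum>i\<in>{1..n}. v i) = real n * a}"])
  show "avg_invariant (star_edges n) {v. (\<Sum>i\<in>{1..n}. v i) = real n * a}"
    unfolding avg_invariant_def star_edges_eq_image using sum_avg_step_star_eq by auto
qed (use assms mean_step_sq_dev_star in \<open>auto simp: finite_star_edges star_edges_nonempty\<close>)

lemma exp_l1_dev_le_mean_sq_dev: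
  assumes "finite E" "E \<noteq> {}" "0 < \<epsilon>" "1 \<le> n"
  shows "exp_l1_dev n E t v0
           \<le> real n / (2 * \<epsilon>) * mean_after E t (sq_dev n ((\<Sum>j\<in>{1..n}. v0 j) / real n)) v0 + \<epsilon> / 2"
proof -
  let ?a = "(\<Sum>j\<in>{1..n}. v0 j) / real n"
  have "exp_l1_dev n E t v0 \<le> mean_after E t (\<lambda>v. real n / (2 * \<epsilon>) * sq_dev n ?a v + \<epsilon> / 2) v0"
    unfolding exp_l1_dev_eq_mean_after
    by (rule mean_after_mono[where I = UNIV]) (use l1_dev_le_sq_dev assms in \<open>auto simp: avg_invariant_def\<close>)
  also have "\<dots> = real n / (2 * \<epsilon>) * mean_after E t (sq_dev n ?a) v0 + \<epsilon> / 2"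
    by (rule mean_after_affine[OF assms(1,2)])
  finally show ?thesis .
qed

lemma l1_mixed_star:
  assumes "0 < \<epsilon>" "2 \<le> n" "2 * real n * ln (real n / \<epsilon>^2) \<le> real T"
  shows "l1_mixed n (star_edges n) \<epsilon> T"
  unfolding l1_mixed_def
proof (intro allI impI)
  fix v0 :: "nat \<Rightarrow> real"
  assume norm: "(\<Sum>i\<in>{1..n}. \<bar>v0 i\<bar>) = 1"
  let ?a = "(\<Sum>j\<in>{1..n}. v0 j) / real n"
  let ?r = "1 - 1 / (2 * real n)"
  have n0: "0 < real n" using assms(2) by simp
  have r0: "0 \<le> ?r" using assms(2) by (simp add: field_simps)
  have "?r ^ T \<le> exp (- (1 / (2 * real n))) ^ T"
    using exp_ge_add_one_self[of "- (1 / (2 * real n))"] r0 by (intro power_mono) auto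
  also have "\<dots> = exp (- (real T / (2 * real n)))" by (simp add: exp_of_nat_mult[symmetric])
  also have "\<dots> \<le> exp (- ln (real n / \<epsilon>^2))" using assms(3) n0 by (simp add: field_simps)
  also have "\<dots> = \<epsilon>^2 / real n" using n0 assms(1) by (simp add: exp_minus)
  finally have decay: "?r ^ T \<le> \<epsilon>^2 / real n" .
  have "mean_after (star_edges n) T (sq_dev n ?a) v0 \<le> ?r ^ T * sq_dev n ?a v0"
    using assms(2) n0 by (intro mean_after_sq_dev_star) auto
  also have "\<dots> \<le> ?r ^ T"
    using sq_dev_mean_le_l1_norm[OF norm] assms(2) r0 by (intro mult_left_le) auto
  finally have "real n / (2 * \<epsilon>) * mean_after (star_edges n) T (sq_dev n ?a) v0
      \<le> real n / (2 * \<epsilon>) * (\<epsilon>^2 / real n)"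
    using decay assms(1) n0 by (intro mult_left_mono) auto
  also have "\<dots> = \<epsilon> / 2" using assms(1) n0 by (simp add: power2_eq_square)
  finally have "real n / (2 * \<epsilon>) * mean_after (star_edges n) T (sq_dev n ?a) v0 \<le> \<epsilon> / 2" .
  then show "exp_l1_dev n (star_edges n) T v0 \<le> \<epsilon>"
    using exp_l1_dev_le_mean_sq_dev[OF finite_star_edges star_edges_nonempty[OF assms(2)] assms(1), of n T v0]
      assms(2) by linarith
qed

lemma ln_ge_1: "3 \<le> n \<Longrightarrow> 1 \<le> ln (real n)"
  using exp_le by (subst ln_ge_iff) auto

lemma t_eps1_star_le:
  assumes "0 < \<epsilon>" "\<epsilon> < 1" "3 \<le> n"
  shows "real (t_eps1 n (star_edges n) \<epsilon>) \<le> (3 + 4 * - ln \<epsilon>) * real n * ln (real n)"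
proof -
  define x where "x = 2 * real n * ln (real n / \<epsilon>^2)"
  have x_eq: "x = 2 * real n * ln (real n) + 4 * - ln \<epsilon> * real n"
    using assms(1,3) by (simp add: x_def ln_div ln_realpow algebra_simps)
  have ln_n: "1 \<le> ln (real n)" using ln_ge_1[OF assms(3)] .
  have ln_eps: "0 \<le> - ln \<epsilon>" using assms(1,2) by simp
  have "t_eps1 n (star_edges n) \<epsilon> \<le> nat \<lceil>x\<rceil>"
    using assms(1,3) real_nat_ceiling_ge[of x] by (intro t_eps1_le l1_mixed_star) (auto simp: x_def)
  moreover have "real (nat \<lceil>x\<rceil>) \<le> x + 1"
  proof -
    have "0 \<le> x" unfolding x_eq using ln_n ln_eps by (intro add_nonneg_nonneg mult_nonneg_nonneg) auto
    then show ?thesis using of_int_ceiling_le_add_one[of x] by simp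
  qed
  ultimately have "real (t_eps1 n (star_edges n) \<epsilon>) \<le> x + 1"
    by (meson of_nat_le_iff order_trans)
  also have "\<dots> \<le> (3 + 4 * - ln \<epsilon>) * real n * ln (real n)"
  proof -
    have "4 * - ln \<epsilon> * real n * 1 \<le> 4 * - ln \<epsilon> * real n * ln (real n)"
      using ln_eps ln_n by (intro mult_left_mono) (auto intro: mult_nonneg_nonpos)
    moreover have "1 * 1 \<le> real n * ln (real n)" using assms(3) ln_n by (intro mult_mono) auto
    ultimately show ?thesis unfolding x_eq by (simp add: algebra_simps)
  qed
  finally show ?thesis .
qed

section \<open>Lower bound\<close>

definition ent :: "real \<Rightarrow> real" where
  "ent x = (if x \<le> 0 then 0 else - x * ln x)"

lemma ent_nonneg: "x \<le> 1 \<Longrightarrow> 0 \<le> ent x"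
  by (auto simp: ent_def mult_nonneg_nonpos)

lemma ent_ge_mul_ln_sum: "0 \<le> a \<Longrightarrow> 0 \<le> b \<Longrightarrow> 0 < a + b \<Longrightarrow> - a * ln (a + b) \<le> ent a"
  by (cases "a = 0") (auto simp: ent_def)

lemma ent_midpoint_le:
  assumes "0 \<le> a" "0 \<le> b"
  shows "2 * ent ((a + b) / 2) \<le> ent a + ent b + (a + b)"
proof (cases "a + b = 0")
  case True
  then show ?thesis using assms by (simp add: ent_def)
next
  case False
  then have s: "0 < a + b" using assms by simp
  have ln_half: "ln ((a + b) / 2) = ln (a + b) - ln 2" using s by (simp add: ln_div)
  have "2 * ent ((a + b) / 2) = - (a + b) * ln ((a + b) / 2)" using s by (simp add: ent_def algebra_simps)
  also have "\<dots> = - (a + b) * ln (a + b) + (a + b) * ln 2"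
    unfolding ln_half by (simp add: algebra_simps)
  also have "\<dots> \<le> - (a + b) * ln (a + b) + (a + b)"
    using s ln_2_less_1 by (intro add_left_mono) (simp add: mult_left_le)
  also have "\<dots> \<le> ent a + ent b + (a + b)"
    using ent_ge_mul_ln_sum[of a b] ent_ge_mul_ln_sum[of b a] assms s by (simp add: algebra_simps)
  finally show ?thesis .
qed

definition prob_vectors :: "nat \<Rightarrow> (nat \<Rightarrow> real) set" where
  "prob_vectors n = {v. (\<forall>i\<in>{1..n}. 0 \<le> v i) \<and> (\<Sum>i\<in>{1..n}. v i) = 1}"

lemma prob_vectors_le_1: "v \<in> prob_vectors n \<Longrightarrow> i \<in> {1..n} \<Longrightarrow> v i \<le> 1"
  using member_le_sum[of i "{1..n}" v] by (auto simp: prob_vectors_def)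

lemma avg_invariant_prob_vectors_star: "avg_invariant (star_edges n) (prob_vectors n)"
  unfolding avg_invariant_def star_edges_eq_image
proof (clarify)
  fix v k assume v: "v \<in> prob_vectors n" and k: "k \<in> {2..n}"
  then have "0 \<le> v 1" "0 \<le> v k" "k \<noteq> 1" by (auto simp: prob_vectors_def)
  then have "0 \<le> avg_step {1, k} v i" if "i \<in> {1..n}" for i
    using v that by (auto simp: prob_vectors_def avg_step_def)
  then show "avg_step {1, k} v \<in> prob_vectors n"
    using v sum_avg_step_star_eq[OF k] by (auto simp: prob_vectors_def)
qed

text \<open>The term 2 v 1 cancels the centre's share of the entropy gain v 1 + v k of the
  step along {1,k}, leaving 2 v k, whose average over the leaves is at most 2/(n-1).\<close>

definition star_potential :: "nat \<Rightarrow> (nat \<Rightarrow> real) \<Rightarrow> real" where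
  "star_potential n v = (\<Sum>i\<in>{1..n}. ent (v i)) + 2 * v 1"

lemma star_potential_avg_step_le:
  assumes "k \<in> {2..n}" "v \<in> prob_vectors n"
  shows "star_potential n (avg_step {1, k} v) \<le> star_potential n v + 2 * v k"
proof -
  have "0 \<le> v 1" "0 \<le> v k" using assms by (auto simp: prob_vectors_def)
  then have "2 * ent ((v 1 + v k) / 2) \<le> ent (v 1) + ent (v k) + (v 1 + v k)"
    by (rule ent_midpoint_le)
  moreover have "avg_step {1, k} v 1 = (v 1 + v k) / 2" using assms(1) by (simp add: avg_step_def)
  ultimately show ?thesis
    unfolding star_potential_def sum_avg_step_star[OF assms(1)] by simp
qed

lemma mean_step_star_potential_le:
  assumes "2 \<le> n" "v \<in> prob_vectors n"
  shows "mean_step (star_edges n) (star_potential n) v \<le> star_potential n v + 2 / real (n - 1)"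
proof -
  have leaves: "(\<Sum>k\<in>{2..n}. v k) \<le> 1"
  proof -
    have "{1..n} = insert 1 {2..n}" using assms(1) by auto
    then have "(\<Sum>i\<in>{1..n}. v i) = v 1 + (\<Sum>k\<in>{2..n}. v k)" by simp
    moreover have "0 \<le> v 1" using assms by (auto simp: prob_vectors_def)
    ultimately show ?thesis using assms(2) by (simp add: prob_vectors_def)
  qed
  have "mean_step (star_edges n) (star_potential n) v
      \<le> (\<Sum>k\<in>{2..n}. star_potential n v + 2 * v k) / real (n - 1)"
    unfolding mean_step_def sum_star_edges card_star_edges
    using star_potential_avg_step_le assms(2) by (intro divide_right_mono sum_mono) auto
  also have "\<dots> = star_potential n v + 2 * (\<Sum>k\<in>{2..n}. v k) / real (n - 1)"
    using assms(1) by (simp add: sum.distrib sum_distrib_left add_divide_distrib)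
  also have "\<dots> \<le> star_potential n v + 2 / real (n - 1)"
    using leaves by (simp add: divide_right_mono)
  finally show ?thesis .
qed

lemma l1_dev_ge_entropy:
  assumes "1 < K" "0 < ln (real n / K)" "v \<in> prob_vectors n" "(\<Sum>j\<in>{1..n}. v0 j) = 1"
  shows "(1 - 1 / K) * (1 - (\<Sum>i\<in>{1..n}. ent (v i)) / ln (real n / K)) \<le> l1_dev n v0 v"
proof -
  define L where "L = ln (real n / K)"
  define q where "q = 1 - 1 / K"
  have L0: "0 < L" and q0: "0 < q" using assms(1,2) by (simp_all add: L_def q_def)
  have n0: "0 < real n" using assms(2) by (cases n) auto
  have pointwise: "q * (v i - ent (v i) / L) \<le> \<bar>v i - 1 / real n\<bar>" if i: "i \<in> {1..n}" for i
  proof (cases "K / real n \<le> v i")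
    case True
    then have "q * v i \<le> v i - 1 / real n" using assms(1) n0 by (simp add: q_def field_simps)
    moreover have "0 \<le> ent (v i)" using prob_vectors_le_1[OF assms(3) i] by (rule ent_nonneg)
    then have "0 \<le> q * ent (v i) / L" using q0 L0 by simp
    ultimately show ?thesis by (simp add: right_diff_distrib)
  next
    case False
    have "v i * L \<le> ent (v i)"
    proof (cases "v i = 0")
      case False
      with assms(3) i have pos: "0 < v i" by (force simp: prob_vectors_def)
      have "ln (v i) \<le> ln (K / real n)" using \<open>\<not> K / real n \<le> v i\<close> pos by simp
      also have "\<dots> = - L" using assms(1) n0 by (simp add: L_def ln_div)
      finally have "v i * ln (v i) \<le> v i * - L" using pos by (intro mult_left_mono) auto
      then show ?thesis using pos by (simp add: ent_def)
    qed (simp add: ent_def)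
    then have "v i - ent (v i) / L \<le> 0" using L0 by (simp add: field_simps)
    then show ?thesis using q0 by (simp add: mult_nonneg_nonpos order_trans[OF _ abs_ge_zero])
  qed
  have "(\<Sum>i\<in>{1..n}. q * (v i - ent (v i) / L))
      = q * (\<Sum>i\<in>{1..n}. v i) - q * (\<Sum>i\<in>{1..n}. ent (v i)) / L"
    by (simp add: right_diff_distrib sum_subtractf sum_distrib_left sum_divide_distrib)
  then have "q * (1 - (\<Sum>i\<in>{1..n}. ent (v i)) / L) = (\<Sum>i\<in>{1..n}. q * (v i - ent (v i) / L))"
    using assms(3) by (simp add: prob_vectors_def right_diff_distrib)
  also have "\<dots> \<le> l1_dev n v0 v"
    unfolding l1_dev_def assms(4) by (rule sum_mono) (rule pointwise)
  finally show ?thesis by (simp add: q_def L_def)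
qed

definition unit_vec :: "nat \<Rightarrow> nat \<Rightarrow> real" where
  "unit_vec k i = (if i = k then 1 else 0)"

lemma unit_vec_leaf:
  assumes "2 \<le> n"
  shows "(\<Sum>i\<in>{1..n}. unit_vec 2 i) = 1"
    and "unit_vec 2 \<in> prob_vectors n"
    and "star_potential n (unit_vec 2) = 0"
proof -
  show "(\<Sum>i\<in>{1..n}. unit_vec 2 i) = 1"
    using assms by (simp add: unit_vec_def)
  then show "unit_vec 2 \<in> prob_vectors n" by (simp add: prob_vectors_def unit_vec_def)
  have "(\<Sum>i\<in>{1..n}. ent (unit_vec 2 i)) = 0"
    by (rule sum.neutral) (auto simp: ent_def unit_vec_def)
  then show "star_potential n (unit_vec 2) = 0" by (simp add: star_potential_def unit_vec_def)
qed

lemma exp_l1_dev_star_leaf_ge: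
  assumes "2 \<le> n" "1 < K" "K < real n"
  shows "(1 - 1 / K) * (1 - 2 * real t / (real (n - 1) * ln (real n / K)))
           \<le> exp_l1_dev n (star_edges n) t (unit_vec 2)"
proof -
  let ?E = "star_edges n" and ?e = "unit_vec 2"
  define L where "L = ln (real n / K)"
  define q where "q = 1 - 1 / K"
  have L0: "0 < L" and q0: "0 < q" using assms by (simp_all add: L_def q_def)
  note fin = finite_star_edges and ne = star_edges_nonempty[OF assms(1)]
  have "mean_after ?E t (star_potential n) ?e \<le> star_potential n ?e + real t * (2 / real (n - 1))"
    using avg_invariant_prob_vectors_star mean_step_star_potential_le[OF assms(1)] unit_vec_leaf(2)[OF assms(1)]
    by (rule mean_after_linear_growth[OF fin ne])
  then have growth: "mean_after ?E t (star_potential n) ?e \<le> 2 * real t / real (n - 1)"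
    using unit_vec_leaf(3)[OF assms(1)] by (simp add: mult.commute)
  have "q * (1 - 2 * real t / (real (n - 1) * L)) \<le> q * (1 - mean_after ?E t (star_potential n) ?e / L)"
    using growth q0 L0 by (intro mult_left_mono) (auto simp: field_simps)
  also have "\<dots> = (- (q / L)) * mean_after ?E t (star_potential n) ?e + q"
    by (simp add: algebra_simps)
  also have "\<dots> = mean_after ?E t (\<lambda>v. (- (q / L)) * star_potential n v + q) ?e"
    by (rule mean_after_affine[OF fin ne, symmetric])
  also have "\<dots> \<le> mean_after ?E t (l1_dev n ?e) ?e"
  proof (rule mean_after_mono[OF avg_invariant_prob_vectors_star _ unit_vec_leaf(2)[OF assms(1)]])
    fix v assume v: "v \<in> prob_vectors n"
    then have "(\<Sum>i\<in>{1..n}. ent (v i)) \<le> star_potential n v"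
      by (auto simp: star_potential_def prob_vectors_def)
    then have "(- (q / L)) * star_potential n v + q \<le> q * (1 - (\<Sum>i\<in>{1..n}. ent (v i)) / L)"
      using q0 L0 by (simp add: field_simps mult_left_mono)
    also have "\<dots> \<le> l1_dev n ?e v"
      using l1_dev_ge_entropy[OF assms(2) _ v unit_vec_leaf(1)[OF assms(1)]] L0
      by (simp add: q_def L_def)
    finally show "(- (q / L)) * star_potential n v + q \<le> l1_dev n ?e v" .
  qed
  finally show ?thesis by (simp add: exp_l1_dev_eq_mean_after q_def L_def)
qed

lemma l1_mixed_t_eps1_star:
  assumes "0 < \<epsilon>" "2 \<le> n"
  shows "l1_mixed n (star_edges n) \<epsilon> (t_eps1 n (star_edges n) \<epsilon>)"
  using assms real_nat_ceiling_ge by (intro l1_mixed_t_eps1 l1_mixed_star) auto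

lemma exp_l1_dev_star_leaf_t_eps1:
  assumes "0 < \<epsilon>" "2 \<le> n"
  shows "exp_l1_dev n (star_edges n) (t_eps1 n (star_edges n) \<epsilon>) (unit_vec 2) \<le> \<epsilon>"
proof -
  have "(\<Sum>i\<in>{1..n}. \<bar>unit_vec 2 i\<bar>) = 1"
    using unit_vec_leaf(1)[OF assms(2)] by (simp add: unit_vec_def)
  then show ?thesis using l1_mixed_t_eps1_star[OF assms] by (simp add: l1_mixed_def)
qed

lemma t_eps1_star_pos:
  assumes "0 < \<epsilon>" "\<epsilon> < 1" "2 \<le> n"
  shows "0 < t_eps1 n (star_edges n) \<epsilon>"
proof (rule ccontr)
  assume "\<not> 0 < t_eps1 n (star_edges n) \<epsilon>"
  then have "l1_dev n (unit_vec 2) (unit_vec 2) \<le> \<epsilon>"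
    using exp_l1_dev_star_leaf_t_eps1[OF assms(1,3)] by (simp add: exp_l1_dev_eq_mean_after)
  moreover have "1 \<le> l1_dev n (unit_vec 2) (unit_vec 2)"
  proof -
    have "2 \<in> {2..n}" using assms(3) by simp
    from sum_split_center_leaf[OF this, of "\<lambda>i. \<bar>unit_vec 2 i - 1 / real n\<bar>"]
    have "l1_dev n (unit_vec 2) (unit_vec 2)
        = \<bar>0 - 1 / real n\<bar> + \<bar>1 - 1 / real n\<bar> + (\<Sum>i\<in>{1..n} - {1, 2}. \<bar>unit_vec 2 i - 1 / real n\<bar>)"
      unfolding l1_dev_def unit_vec_leaf(1)[OF assms(3)] by (simp add: unit_vec_def)
    moreover have "0 \<le> (\<Sum>i\<in>{1..n} - {1, 2}. \<bar>unit_vec 2 i - 1 / real n\<bar>)" by (simp add: sum_nonneg)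
    ultimately show ?thesis using assms(3) by simp
  qed
  ultimately show False using assms(2) by simp
qed

lemma t_eps1_star_ge_large:
  assumes "0 < \<epsilon>" "\<epsilon> < 1" "(2 / (1 - \<epsilon>))^2 \<le> real n"
  shows "(1 - \<epsilon>) / 16 * real n * ln (real n) \<le> real (t_eps1 n (star_edges n) \<epsilon>)"
proof -
  define K where "K = 2 / (1 - \<epsilon>)"
  define L where "L = ln (real n / K)"
  define t where "t = t_eps1 n (star_edges n) \<epsilon>"
  have K2: "2 \<le> K" using assms(1,2) by (simp add: K_def field_simps)
  have KK: "K * K \<le> real n" using assms(3) by (simp add: K_def power2_eq_square)
  have "K * 2 \<le> K * K" using K2 by (intro mult_left_mono) auto
  then have n4: "4 \<le> real n" and Kn: "K < real n" using K2 KK by linarith+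
  then have n2: "2 \<le> n" by simp
  have L0: "0 < L" using Kn K2 by (simp add: L_def)
  have n1: "0 < real (n - 1)" using n2 by simp
  have "(1 - 1 / K) * (1 - 2 * real t / (real (n - 1) * L)) \<le> \<epsilon>"
    using exp_l1_dev_star_leaf_ge[OF n2 _ Kn, of t] exp_l1_dev_star_leaf_t_eps1[OF assms(1) n2] K2
    by (simp add: t_def L_def)
  moreover have "1 - 1 / K = (1 + \<epsilon>) / 2" using assms(2) by (simp add: K_def field_simps)
  ultimately have "(1 - \<epsilon>) / 2 \<le> (1 + \<epsilon>) / 2 * (2 * real t / (real (n - 1) * L))"
    by (simp add: algebra_simps)
  also have "\<dots> \<le> 2 * real t / (real (n - 1) * L)"
    using assms(1,2) L0 n1 by (intro mult_left_le_one_le) auto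
  finally have main: "(1 - \<epsilon>) * (real (n - 1) * L) \<le> 4 * real t"
    using L0 n1 by (simp add: field_simps)
  have "ln (K * K) \<le> ln (real n)" using KK K2 n4 by (subst ln_le_cancel_iff) auto
  then have "ln (real n) / 2 \<le> L" using K2 n4 by (simp add: L_def ln_div ln_mult)
  moreover have "real n / 2 \<le> real (n - 1)" using n2 by (simp add: of_nat_diff)
  ultimately have "real n / 2 * (ln (real n) / 2) \<le> real (n - 1) * L"
    using n4 by (intro mult_mono) auto
  then have "(1 - \<epsilon>) * (real n / 2 * (ln (real n) / 2)) \<le> (1 - \<epsilon>) * (real (n - 1) * L)"
    using assms(2) by (intro mult_left_mono) auto
  with main show ?thesis by (simp add: t_def field_simps)
qed

lemma t_eps1_star_ge:
  assumes "0 < \<epsilon>" "\<epsilon> < 1" "3 \<le> n"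
  defines "M \<equiv> (2 / (1 - \<epsilon>))^2"
  shows "min ((1 - \<epsilon>) / 16) (1 / (M * ln M)) * real n * ln (real n)
           \<le> real (t_eps1 n (star_edges n) \<epsilon>)"
proof (cases "M \<le> real n")
  case True
  have "min ((1 - \<epsilon>) / 16) (1 / (M * ln M)) * real n * ln (real n) \<le> (1 - \<epsilon>) / 16 * real n * ln (real n)"
    using ln_ge_1[OF assms(3)] by (intro mult_right_mono min.cobounded1) auto
  also have "\<dots> \<le> real (t_eps1 n (star_edges n) \<epsilon>)"
    using True assms(1,2) by (intro t_eps1_star_ge_large) (auto simp: M_def)
  finally show ?thesis .
next
  case False
  have M4: "4 \<le> M"
    using power_mono[of 2 "2 / (1 - \<epsilon>)" 2] assms(1,2) by (simp add: M_def field_simps)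
  have "real n * ln (real n) \<le> M * ln M"
    using False M4 ln_ge_1[OF assms(3)] assms(3) by (intro mult_mono) auto
  then have "min ((1 - \<epsilon>) / 16) (1 / (M * ln M)) * (real n * ln (real n)) \<le> 1 / (M * ln M) * (M * ln M)"
    by (rule mult_mono[OF min.cobounded2]) (use M4 ln_ge_1[OF assms(3)] in auto)
  also have "\<dots> \<le> real (t_eps1 n (star_edges n) \<epsilon>)"
    using M4 t_eps1_star_pos[OF assms(1,2), of n] assms(3) by (simp add: Suc_leI)
  finally show ?thesis by (simp add: mult.assoc)
qed

theorem corollary4:
  fixes \<epsilon> :: real
  assumes "0 < \<epsilon>" and "\<epsilon> < 1"
  shows "\<exists>c C. 0 < c \<and> c \<le> C \<and>
           (\<forall>n::nat. n \<ge> 3 \<longrightarrow>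
              c * real n * ln (real n) \<le> real (t_eps1 n (star_edges n) \<epsilon>) \<and>
              real (t_eps1 n (star_edges n) \<epsilon>) \<le> C * real n * ln (real n))"
proof (intro exI conjI allI impI)
  define M where "M = (2 / (1 - \<epsilon>))^2"
  let ?c = "min ((1 - \<epsilon>) / 16) (1 / (M * ln M))" and ?C = "3 + 4 * - ln \<epsilon>"
  have "4 \<le> M"
    using power_mono[of 2 "2 / (1 - \<epsilon>)" 2] assms by (simp add: M_def field_simps)
  then show "0 < ?c" using assms by simp
  have "?c \<le> (1 - \<epsilon>) / 16" by (rule min.cobounded1)
  moreover have "(1 - \<epsilon>) / 16 \<le> 1" using assms by simp
  ultimately have "?c \<le> 1" by (rule order_trans)
  moreover have "0 \<le> - ln \<epsilon>" using assms by simp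
  ultimately show "?c \<le> ?C" by linarith
  fix n :: nat assume "3 \<le> n"
  then show "?c * real n * ln (real n) \<le> real (t_eps1 n (star_edges n) \<epsilon>)"
    and "real (t_eps1 n (star_edges n) \<epsilon>) \<le> ?C * real n * ln (real n)"
    using t_eps1_star_ge t_eps1_star_le assms by (auto simp: M_def)
qed

end
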